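(* Let $\Gamma=(V,E,\ell)$ be a connected finite labeled simplicial graph with all labels even whose Artin group is of FC-type, $\mathbb{K}$ a field of characteristic $0$, and $\chi:A_\Gamma\to\mathbb{Z}$ a surjective non-resonant homomorphism. Then for every $d\in\mathbb{T}_\Gamma$ and every edge $e\in E$, $\operatorname{mult}_d(\mathbf{p}_e\mathbf{q}_e)\le 2$.
   Context: $\Gamma$ has labels $\ell(e)=2\tilde\ell(e)$, $\tilde\ell(e)\ge1$; $A_\Gamma=\langle g_v\ (v\in V)\mid (g_vg_w)^{\tilde\ell(e)}=(g_wg_v)^{\tilde\ell(e)},\ e=\{v,w\}\in E\rangle$; FC-type means that for every clique $X$ the Coxeter group on $g_v$ ($v\in X$) with $g_v^2=1$, $(g_vg_w)^{\ell(\{v,w\})}=1$ is finite. $m_v=\chi(g_v)$, $m_e=m_v+m_w$ for $e=\{v,w\}$; non-resonant means $m_v\ne0$ for all $v$. For $e=\{v,w\}\in E$: $\mathbf{p}_e=(t^{m_v}-1)(t^{m_w}-1)$ and $\mathbf{q}_e=q_{\tilde\ell(e)}(t^{m_e})$ with $q_n(x)=(x^n-1)/(x-1)$. For $f\in\mathbb{K}[t^{\pm1}]$, $\operatorname{mult}_d(f)$ is the largest $m$ with $\Phi_d(t)^m\mid f$, $\Phi_d$ the $d$-th cyclotomic polynomial. $\mathbb{T}_\Gamma=\{d\in\mathbb{Z}_{>1}: d\mid m_v\text{ for some }v\}\cup\{d\in\mathbb{Z}_{>1}: d\mid\tilde\ell(e)m_e,\ d\nmid m_e\text{ for some }e\in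 E\}$. *)

theory Defs
  imports "HOL-Computational_Algebra.Polynomial"
begin

text \<open>Standard recursive definition: t^n - 1 = product of Phi_d over d dividing n.\<close>
function cyclotomic :: "nat \<Rightarrow> 'a::field_char_0 poly" where
  "cyclotomic n = (if n = 0 then 1 else
     (monom 1 n - 1) div (\<Prod>d\<in>{d. d dvd n \<and> d < n}. cyclotomic d))"
  by auto
termination
  by (relation "measure id") auto

declare cyclotomic.simps[simp del]

text \<open>A pair (k, g) represents the Laurent polynomial t^k * g(t).\<close>
type_synonym 'a lpoly = "int \<times> 'a poly"

definition lp_eq :: "'a::field lpoly \<Rightarrow> 'a lpoly \<Rightarrow> bool" where
  "lp_eq a b = (case a of (k, g) \<Rightarrow> case b of (j, h) \<Rightarrow>
     monom 1 (nat (k - min k j)) * g = monom 1 (nat (j - min k j)) * h)"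

definition lp_mult :: "'a::field lpoly \<Rightarrow> 'a lpoly \<Rightarrow> 'a lpoly" where
  "lp_mult a b = (case a of (k, g) \<Rightarrow> case b of (j, h) \<Rightarrow> (k + j, g * h))"

definition lp_add :: "'a::field lpoly \<Rightarrow> 'a lpoly \<Rightarrow> 'a lpoly" where
  "lp_add a b = (case a of (k, g) \<Rightarrow> case b of (j, h) \<Rightarrow>
     (min k j, monom 1 (nat (k - min k j)) * g + monom 1 (nat (j - min k j)) * h))"

definition lp_sum :: "'a::field lpoly list \<Rightarrow> 'a lpoly" where
  "lp_sum xs = foldr lp_add xs (0, 0)"

definition lp_mon :: "int \<Rightarrow> 'a::field lpoly" where
  "lp_mon m = (m, 1)"

definition lp_const :: "'a::field \<Rightarrow> 'a lpoly" where
  "lp_const c = (0, [:c:])"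

definition lp_dvd :: "'a::field lpoly \<Rightarrow> 'a lpoly \<Rightarrow> bool" where
  "lp_dvd a b = (\<exists>c. lp_eq (lp_mult a c) b)"

definition mult_cyc :: "nat \<Rightarrow> 'a::field_char_0 lpoly \<Rightarrow> nat" where
  "mult_cyc d f = Max {m. lp_dvd (0, cyclotomic d ^ m) f}"

definition tpow_minus_one :: "int \<Rightarrow> 'a::field lpoly" where
  "tpow_minus_one m = lp_add (lp_mon m) (lp_const (-1))"

text \<open>q_n(t^m) = sum_{i<n} (t^m)^i = (x^n - 1)/(x - 1) at x = t^m\<close>
definition q_at :: "nat \<Rightarrow> int \<Rightarrow> 'a::field lpoly" where
  "q_at n m = lp_sum (map (\<lambda>i. lp_mon (int i * m)) [0..<n])"

definition simplicial_graph :: "'v set \<Rightarrow> 'v set set \<Rightarrow> bool" where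
  "simplicial_graph V E = (finite V \<and> (\<forall>e\<in>E. e \<subseteq> V \<and> card e = 2))"

definition graph_connected :: "'v set \<Rightarrow> 'v set set \<Rightarrow> bool" where
  "graph_connected V E =
     (\<forall>v\<in>V. \<forall>w\<in>V. (v, w) \<in> {(a, b). {a, b} \<in> E}\<^sup>*)"

definition is_clique :: "'v set \<Rightarrow> 'v set set \<Rightarrow> 'v set \<Rightarrow> bool" where
  "is_clique V E X = (X \<subseteq> V \<and> (\<forall>v\<in>X. \<forall>w\<in>X. v \<noteq> w \<longrightarrow> {v, w} \<in> E))"

text \<open>Relators of the Coxeter group on the generators g_v (v in X):
  g_v^2 and (g_v g_w)^(l e) with l e = 2 * lt e, for edges e = {v,w} inside X.\<close>
definition cox_relators :: "'v set set \<Rightarrow> ('v set \<Rightarrow> nat) \<Rightarrow> 'v set \<Rightarrow> 'v list set" where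
  "cox_relators E lt X =
     {[s, s] | s. s \<in> X} \<union>
     {concat (replicate (2 * lt {s, t}) [s, t]) | s t. s \<in> X \<and> t \<in> X \<and> s \<noteq> t \<and> {s, t} \<in> E}"

text \<open>Since all generators are involutions,
  the Coxeter group is the monoid presented on words over X modulo relators = 1,
  i.e. words modulo the equivalence generated by these moves.\<close>
definition cox_step :: "'v set set \<Rightarrow> ('v set \<Rightarrow> nat) \<Rightarrow> 'v set \<Rightarrow> ('v list \<times> 'v list) set" where
  "cox_step E lt X =
     {(u @ r @ w, u @ w) | u r w. u \<in> lists X \<and> w \<in> lists X \<and> r \<in> cox_relators E lt X}"

definition cox_equiv :: "'v set set \<Rightarrow> ('v set \<Rightarrow> nat) \<Rightarrow> 'v set \<Rightarrow> ('v list \<times> 'v list) set" where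
  "cox_equiv E lt X = (cox_step E lt X \<union> (cox_step E lt X)\<inverse>)\<^sup>*"

definition coxeter_finite :: "'v set set \<Rightarrow> ('v set \<Rightarrow> nat) \<Rightarrow> 'v set \<Rightarrow> bool" where
  "coxeter_finite E lt X = finite (lists X // cox_equiv E lt X)"

definition FC_type :: "'v set \<Rightarrow> 'v set set \<Rightarrow> ('v set \<Rightarrow> nat) \<Rightarrow> bool" where
  "FC_type V E lt = (\<forall>X. is_clique V E X \<longrightarrow> coxeter_finite E lt X)"

text \<open>Elements of A_Gamma are represented by words in the g_v^{+-1}; (v, True) stands for
  g_v^{-1}. A homomorphism chi : A_Gamma -> Z is determined by m v = chi(g_v), and every
  m : V -> Z defines one (the Artin relations hold in the abelian group Z).\<close>
definition chi_word :: "('v \<Rightarrow> int) \<Rightarrow> ('v \<times> bool) list \<Rightarrow> int" where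
  "chi_word m w = sum_list (map (\<lambda>(v, inv). if inv then - m v else m v) w)"

definition chi_surjective :: "'v set \<Rightarrow> ('v \<Rightarrow> int) \<Rightarrow> bool" where
  "chi_surjective V m = (\<forall>k::int. \<exists>w \<in> lists (V \<times> UNIV). chi_word m w = k)"

definition edge_m :: "('v \<Rightarrow> int) \<Rightarrow> 'v set \<Rightarrow> int" where
  "edge_m m e = (\<Sum>v\<in>e. m v)"

definition T_Gamma :: "'v set \<Rightarrow> 'v set set \<Rightarrow> ('v set \<Rightarrow> nat) \<Rightarrow> ('v \<Rightarrow> int) \<Rightarrow> nat set" where
  "T_Gamma V E lt m =
     {d. d > 1 \<and> (\<exists>v\<in>V. int d dvd m v)} \<union>
     {d. d > 1 \<and> (\<exists>e\<in>E. int d dvd int (lt e) * edge_m m e \<and> \<not> int d dvd edge_m m e)}"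

end

theory Submission
  imports Defs "HOL-Computational_Algebra.Polynomial_Factorial" "HOL-Number_Theory.Totient"
begin

text \<open>
  Up to a unit +-t^k of K[t, t^-1], the Laurent polynomial p_e q_e is the ordinary polynomial
  (t^a - 1) (t^b - 1) q_n(t^c) with a = |m_v|, b = |m_w|, c = |m_v + m_w|. As d > 1, the
  cyclotomic polynomial Phi_d has positive degree totient d and divides t^d - 1, so it has a
  prime factor p other than t, and it suffices to show that p^3 divides none of these products.
  In characteristic 0 the polynomial t^N - 1 is squarefree (p^2 dividing it would make p divide
  its derivative N t^(N-1)), so p occurs at most once in each of t^a - 1, t^b - 1 and q_n(t^c),
  the last being a factor of t^(nc) - 1 = q_n(t^c) (t^c - 1). If p divides both t^a - 1 and
  t^b - 1, then it divides t^gcd(a,b) - 1 and hence t^c - 1, so by squarefreeness of t^(nc) - 1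
  it does not divide q_n(t^c). Thus p occurs at most twice.

  The facts about Phi_d come from the product formula (prod over e dvd n of Phi_e) = t^n - 1,
  proved by strong induction on n: distinct Phi_e share no prime factor (again by
  squarefreeness), so their product over the proper divisors of n divides t^n - 1, and the
  degree of Phi_n then follows from (sum over e dvd n of totient e) = n.
\<close>

section \<open>The polynomials x^n - 1\<close>

definition monom_minus_one :: "nat \<Rightarrow> 'a::comm_ring_1 poly" where
  "monom_minus_one n = monom 1 n - 1"

definition geom_poly :: "nat \<Rightarrow> nat \<Rightarrow> 'a::comm_ring_1 poly" where
  "geom_poly n k = (\<Sum>i<n. monom 1 (i * k))"

lemma geom_poly_mult_monom_minus_one:
  "geom_poly n k * monom_minus_one k = (monom_minus_one (n * k) :: 'a::comm_ring_1 poly)"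
proof (induction n)
  case 0
  then show ?case by (simp add: geom_poly_def monom_minus_one_def)
next
  case (Suc n)
  have "geom_poly (Suc n) k * monom_minus_one k
      = geom_poly n k * monom_minus_one k + monom 1 (n * k) * (monom 1 k - 1 :: 'a poly)"
    by (simp add: geom_poly_def monom_minus_one_def distrib_right)
  also have "\<dots> = monom_minus_one (Suc n * k)"
    using Suc.IH by (simp add: monom_minus_one_def mult_monom algebra_simps)
  finally show ?case .
qed

lemma geom_poly_0_right: "geom_poly n 0 = (of_nat n :: 'a::comm_ring_1 poly)"
  by (simp add: geom_poly_def)

lemma monom_minus_one_dvd:
  "e dvd n \<Longrightarrow> monom_minus_one e dvd (monom_minus_one n :: 'a::comm_ring_1 poly)"
  by (metis dvdE dvd_triv_right geom_poly_mult_monom_minus_one mult.commute)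

lemma coeff_monom_minus_one_self:
  "0 < n \<Longrightarrow> coeff (monom_minus_one n :: 'a::comm_ring_1 poly) n = 1"
  by (simp add: monom_minus_one_def coeff_monom)

lemma monom_minus_one_nonzero: "0 < n \<Longrightarrow> monom_minus_one n \<noteq> (0 :: 'a::comm_ring_1 poly)"
  by (metis coeff_0 coeff_monom_minus_one_self zero_neq_one)

lemma degree_monom_minus_one: "0 < n \<Longrightarrow> degree (monom_minus_one n :: 'a::comm_ring_1 poly) = n"
proof (rule antisym)
  show "degree (monom_minus_one n :: 'a poly) \<le> n"
    unfolding monom_minus_one_def
    by (rule order.trans[OF degree_diff_le_max]) (simp add: degree_monom_le)
qed (simp add: le_degree coeff_monom_minus_one_self)

lemma dvd_monom_minus_one_mod:
  fixes p :: "'a::comm_ring_1 poly"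
  assumes "p dvd monom_minus_one a" "p dvd monom_minus_one b"
  shows "p dvd monom_minus_one (a mod b)"
proof -
  have split: "monom_minus_one a
      = monom 1 (a mod b) * monom_minus_one (a div b * b) + (monom_minus_one (a mod b) :: 'a poly)"
  proof -
    have "monom (1::'a) a = monom 1 (a mod b) * monom 1 (a div b * b)"
      by (simp add: mult_monom)
    then show ?thesis
      by (simp add: monom_minus_one_def algebra_simps)
  qed
  have "p dvd monom_minus_one (a div b * b)"
    using assms(2) monom_minus_one_dvd[OF dvd_triv_right] by (rule dvd_trans)
  then have "p dvd monom 1 (a mod b) * monom_minus_one (a div b * b)"
    by (rule dvd_mult)
  with assms(1) show ?thesis
    unfolding split by (simp add: dvd_add_right_iff)
qed

lemma dvd_monom_minus_one_gcd:
  fixes p :: "'a::comm_ring_1 poly"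
  shows "p dvd monom_minus_one a \<Longrightarrow> p dvd monom_minus_one b \<Longrightarrow> p dvd monom_minus_one (gcd a b)"
proof (induction a b rule: gcd_nat_induct)
  case (step a b)
  then show ?case
    using dvd_monom_minus_one_mod[of p a b] gcd_red_nat[of a b] by simp
qed simp

lemma dvd_monom_minus_one_add:
  fixes p :: "'a::comm_ring_1 poly"
  assumes "p dvd monom_minus_one (nat \<bar>a\<bar>)" "p dvd monom_minus_one (nat \<bar>b\<bar>)"
  shows "p dvd monom_minus_one (nat \<bar>a + b\<bar>)"
proof -
  have "gcd a b dvd a + b"
    by simp
  then have "gcd (nat \<bar>a\<bar>) (nat \<bar>b\<bar>) dvd nat \<bar>a + b\<bar>"
    by simp
  then show ?thesis
    by (rule dvd_trans[OF dvd_monom_minus_one_gcd[OF assms] monom_minus_one_dvd])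
qed

lemma prime_elem_not_dvd_monom:
  fixes p :: "'a::idom poly"
  assumes "prime_elem p" "p dvd monom_minus_one n" "0 < n"
  shows "\<not> p dvd monom 1 k"
proof
  assume "p dvd monom 1 k"
  then have "p dvd [:0, 1:] ^ k"
    by (simp add: monom_altdef)
  then have "p dvd [:0, 1:]"
    by (rule prime_elem_dvd_power[OF assms(1)])
  moreover have "[:0, 1:] dvd ([:0, 1:] ^ n :: 'a poly)"
    using assms(3) by (simp add: dvd_power)
  ultimately have "p dvd [:0, 1:] ^ n"
    by (rule dvd_trans)
  then have "p dvd monom 1 n"
    by (simp add: monom_altdef)
  then have "p dvd monom 1 n - monom_minus_one n"
    using assms(2) by (rule dvd_diff)
  then show False
    using assms(1) by (simp add: monom_minus_one_def prime_elem_not_unit)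
qed

lemma prime_elem_square_not_dvd_monom_minus_one:
  fixes p :: "'a::field_char_0 poly"
  assumes p: "prime_elem p" and n: "0 < n"
  shows "\<not> p ^ 2 dvd monom_minus_one n"
proof
  assume "p ^ 2 dvd monom_minus_one n"
  then obtain h where "monom_minus_one n = p ^ 2 * h" ..
  then have h: "monom_minus_one n = p * (p * h)"
    by (simp add: power2_eq_square mult.assoc)
  have "pderiv (monom_minus_one n :: 'a poly) = smult (of_nat n) (monom 1 (n - 1))"
    by (simp add: monom_minus_one_def pderiv_diff pderiv_monom smult_monom)
  moreover have "p dvd pderiv (monom_minus_one n)"
    unfolding h by (simp add: pderiv_mult)
  ultimately have "p dvd monom 1 (n - 1)"
    using n by (simp add: dvd_smult_iff)
  moreover have "p dvd monom_minus_one n"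
    unfolding h by simp
  ultimately show False
    using prime_elem_not_dvd_monom[OF p _ n] by blast
qed

lemma is_unit_geom_poly_0:
  "0 < n \<Longrightarrow> is_unit (geom_poly n 0 :: 'a::field_char_0 poly)"
  by (simp add: geom_poly_0_right of_nat_poly is_unit_const_poly_iff dvd_field_iff)

lemma prime_elem_square_not_dvd_geom_poly:
  fixes p :: "'a::field_char_0 poly"
  assumes p: "prime_elem p" and n: "0 < n"
  shows "\<not> p ^ 2 dvd geom_poly n k"
proof
  assume dvd: "p ^ 2 dvd geom_poly n k"
  show False
  proof (cases "k = 0")
    case True
    have "p dvd p ^ 2"
      by simp
    also note dvd
    also have "geom_poly n k dvd (1 :: 'a poly)"
      using is_unit_geom_poly_0[OF n, where 'a = 'a] True by simp
    finally show False
      using p by (simp add: prime_elem_not_unit)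
  next
    case False
    note dvd
    also have "geom_poly n k dvd monom_minus_one (n * k)"
      by (rule dvdI[OF geom_poly_mult_monom_minus_one[symmetric]])
    finally show False
      using prime_elem_square_not_dvd_monom_minus_one[OF p] n False by simp
  qed
qed

lemma prime_elem_not_dvd_geom_poly:
  fixes p :: "'a::field_char_0 poly"
  assumes p: "prime_elem p" "p dvd monom_minus_one k" and n: "0 < n"
  shows "\<not> p dvd geom_poly n k"
proof
  assume dvd: "p dvd geom_poly n k"
  show False
  proof (cases "k = 0")
    case True
    with dvd is_unit_geom_poly_0[OF n, where 'a = 'a] have "p dvd 1"
      by (blast intro: dvd_trans)
    with p(1) show False
      by (simp add: prime_elem_not_unit)
  next
    case False
    from dvd p(2) have "p ^ 2 dvd geom_poly n k * monom_minus_one k"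
      unfolding power2_eq_square by (rule mult_dvd_mono)
    then show False
      using prime_elem_square_not_dvd_monom_minus_one[OF p(1)] n False
      by (simp add: geom_poly_mult_monom_minus_one)
  qed
qed

section \<open>Prime factors of polynomials over a field\<close>

lemma poly_prime_factor_exists:
  fixes a :: "'a::field poly"
  assumes "a \<noteq> 0" "\<not> is_unit a"
  obtains p where "prime_elem p" "p dvd a"
proof -
  obtain M where M: "prod_mset M = smult (inverse (lead_coeff a)) a"
    and prime: "\<And>p. p \<in># M \<Longrightarrow> prime_elem p"
    using field_poly_prod_mset_prime_factorization[OF assms(1)]
      field_poly_in_prime_factorization_imp_prime[where x = a] by blast
  have c: "inverse (lead_coeff a) \<noteq> 0"
    using assms(1) by simp
  have "M \<noteq> {#}"
  proof
    assume "M = {#}"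
    then have "degree (smult (inverse (lead_coeff a)) a) = 0"
      by (simp flip: M)
    then have "is_unit a"
      using c is_unit_iff_degree[OF assms(1)] by simp
    with assms(2) show False ..
  qed
  then obtain p where p: "p \<in># M"
    by blast
  then have "p dvd smult (inverse (lead_coeff a)) a"
    unfolding M[symmetric] by (rule dvd_prod_mset)
  then have "p dvd a"
    using c by (rule dvd_smult_cancel)
  with prime[OF p] show ?thesis
    by (rule that)
qed

lemma degree_less_mult_prime_elem:
  fixes p b :: "'a::field poly"
  assumes "prime_elem p" "p * b \<noteq> 0"
  shows "degree b < degree (p * b)"
proof -
  have "degree p \<noteq> 0"
    using assms(1) is_unit_iff_degree[of p] by (auto simp: prime_elem_not_unit)
  moreover have "degree (p * b) = degree p + degree b"
    using assms(2) by (simp add: degree_mult_eq)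
  ultimately show ?thesis
    by linarith
qed

lemma prime_elem_dvd_prodE:
  fixes f :: "'b \<Rightarrow> 'a::algebraic_semidom"
  assumes "prime_elem p" "p dvd prod f A"
  obtains x where "x \<in> A" "p dvd f x"
proof -
  have "p dvd prod_mset (image_mset f (mset_set A))"
    using assms(2) by (simp add: prod_unfold_prod_mset)
  then obtain y where "y \<in># image_mset f (mset_set A)" "p dvd y"
    by (rule prime_elem_dvd_prod_msetE[OF assms(1)])
  moreover have "set_mset (mset_set A) \<subseteq> A"
    by (cases "finite A") auto
  ultimately show ?thesis
    using that by auto
qed

text \<open>For an arbitrary field \<open>'a\<close>, the type \<open>'a poly\<close> is not an instance of
  \<open>factorial_ring_gcd\<close>, so the following coprimality facts are proved by induction on the degree.\<close>
lemma dvd_prime_elem_mult_imp_dvd: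
  fixes b y p :: "'a::field poly"
  assumes p: "prime_elem p"
  shows "\<not> p dvd b \<Longrightarrow> b dvd p * y \<Longrightarrow> b dvd y"
proof (induction "degree b" arbitrary: b y rule: less_induct)
  case less
  show ?case
  proof (cases "is_unit b")
    case False
    have "b \<noteq> 0"
      using less.prems(1) by auto
    obtain q where q: "prime_elem q" "q dvd b"
      using poly_prime_factor_exists[OF \<open>b \<noteq> 0\<close> False] by blast
    then obtain b' where b: "b = q * b'"
      by (elim dvdE)
    have "\<not> q dvd p"
    proof
      assume "q dvd p"
      then have "p dvd q"
        using irreducibleD'[OF prime_elem_imp_irreducible[OF p]] prime_elem_not_unit[OF q(1)]
        by blast
      then have "p dvd b"
        using q(2) by (rule dvd_trans)
      with less.prems(1) show False ..
    qed
    moreover have "q dvd p * y"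
      using q(2) less.prems(2) by (rule dvd_trans)
    ultimately have "q dvd y"
      using q(1) prime_elem_dvd_mult_iff by blast
    then obtain y' where y: "y = q * y'"
      by (elim dvdE)
    have b'_dvd: "b' dvd p * y'"
      using less.prems(2) q(1) unfolding b y by (simp add: mult.left_commute)
    have not_dvd: "\<not> p dvd b'"
      using less.prems(1) unfolding b by auto
    have deg: "degree b' < degree b"
      using degree_less_mult_prime_elem[OF q(1)] \<open>b \<noteq> 0\<close> unfolding b by blast
    have "b' dvd y'"
      by (rule less.hyps[OF deg not_dvd b'_dvd])
    then have "q * b' dvd q * y'"
      by (rule mult_dvd_mono[OF dvd_refl])
    then show ?thesis
      unfolding b y .
  qed (simp add: unit_imp_dvd)
qed

lemma mult_dvd_if_no_common_prime_factor:
  fixes a b y :: "'a::field poly"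
  assumes "a dvd y" "b dvd y" "\<And>p. prime_elem p \<Longrightarrow> p dvd a \<Longrightarrow> \<not> p dvd b"
  shows "a * b dvd y"
  using assms
proof (induction "degree a" arbitrary: a y rule: less_induct)
  case less
  consider "a = 0" | "is_unit a" | "a \<noteq> 0" "\<not> is_unit a"
    by blast
  then show ?case
  proof cases
    case 1
    then show ?thesis
      using less.prems(1) by simp
  next
    case 2
    then show ?thesis
      using less.prems(2) by (simp add: mult_unit_dvd_iff')
  next
    case 3
    obtain p where p: "prime_elem p" "p dvd a"
      using poly_prime_factor_exists[OF 3] by blast
    then obtain a' where a: "a = p * a'"
      by (elim dvdE)
    have "p dvd y"
      using p(2) less.prems(1) by (rule dvd_trans)
    then obtain y' where y: "y = p * y'" ..
    have b_dvd: "b dvd y'"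
      using dvd_prime_elem_mult_imp_dvd[OF p(1) less.prems(3)[OF p]] less.prems(2)
      unfolding y by blast
    have a'_dvd: "a' dvd y'"
      using less.prems(1) p(1) unfolding a y by simp
    have deg: "degree a' < degree a"
      using degree_less_mult_prime_elem[OF p(1)] 3(1) unfolding a by blast
    have coprime: "\<not> q dvd b" if "prime_elem q" "q dvd a'" for q
      using less.prems(3)[OF that(1)] that(2) unfolding a by simp
    have "a' * b dvd y'"
      by (rule less.hyps[OF deg a'_dvd b_dvd coprime])
    then have "p * (a' * b) dvd p * y'"
      by (rule mult_dvd_mono[OF dvd_refl])
    then show ?thesis
      unfolding a y by (simp only: mult.assoc)
  qed
qed

lemma prod_dvd_if_pairwise_no_common_prime_factor:
  fixes f :: "'b \<Rightarrow> 'a::field poly"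
  assumes "finite A" "\<And>x. x \<in> A \<Longrightarrow> f x dvd y"
    and "\<And>x x' p. x \<in> A \<Longrightarrow> x' \<in> A \<Longrightarrow> x \<noteq> x' \<Longrightarrow> prime_elem p \<Longrightarrow> p dvd f x
      \<Longrightarrow> \<not> p dvd f x'"
  shows "prod f A dvd y"
  using assms
proof (induction A rule: finite_induct)
  case (insert x A)
  have "f x * prod f A dvd y"
  proof (rule mult_dvd_if_no_common_prime_factor)
    show "f x dvd y"
      by (rule insert.prems(1)) simp
    show "prod f A dvd y"
    proof (rule insert.IH)
      show "f x' dvd y" if "x' \<in> A" for x'
        using insert.prems(1) that by simp
      show "\<not> p dvd f x''"
        if "x' \<in> A" "x'' \<in> A" "x' \<noteq> x''" "prime_elem p" "p dvd f x'" for x' x'' p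
        using insert.prems(2)[of x' x'' p] that by simp
    qed
    show "\<not> p dvd prod f A" if p: "prime_elem p" "p dvd f x" for p
    proof
      assume "p dvd prod f A"
      then obtain x' where "x' \<in> A" "p dvd f x'"
        by (rule prime_elem_dvd_prodE[OF p(1)])
      then show False
        using insert.prems(2)[of x x' p] insert.hyps(2) p by auto
    qed
  qed
  then show ?case
    using insert.hyps by simp
qed simp

lemma prime_elem_power_not_dvd_mult:
  fixes p :: "'a::algebraic_semidom"
  assumes "prime_elem p" "\<not> p ^ Suc i dvd x" "\<not> p ^ Suc j dvd y"
  shows "\<not> p ^ Suc (i + j) dvd x * y"
  using prime_elem_power_dvd_cases[of p "Suc (i + j)" x y "Suc i" "Suc j"] assms by auto

lemma prime_elem_cube_not_dvd_mult:
  fixes p :: "'a::algebraic_semidom"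
  assumes p: "prime_elem p"
    and u: "\<not> p dvd u" and x: "\<not> p ^ 2 dvd x" and y: "\<not> p ^ 2 dvd y" and z: "\<not> p ^ 2 dvd z"
    and not_all: "p dvd x \<Longrightarrow> p dvd y \<Longrightarrow> \<not> p dvd z"
  shows "\<not> p ^ 3 dvd u * x * y * z"
proof -
  note mult = prime_elem_power_not_dvd_mult[OF p]
  have simple: "\<not> p ^ Suc 0 dvd a" if "\<not> p dvd a" for a
    using that by simp
  have double: "\<not> p ^ Suc 1 dvd a" if "\<not> p ^ 2 dvd a" for a
    using that by (simp add: power2_eq_square)
  consider "\<not> p dvd x" | "\<not> p dvd y" | "\<not> p dvd z"
    using not_all by blast
  then show ?thesis
  proof cases
    case 1
    show ?thesis
      using mult[OF mult[OF mult[OF simple[OF u] simple[OF 1]] double[OF y]] double[OF z]]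
      by (simp add: power3_eq_cube mult.assoc)
  next
    case 2
    show ?thesis
      using mult[OF mult[OF mult[OF simple[OF u] double[OF x]] simple[OF 2]] double[OF z]]
      by (simp add: power3_eq_cube mult.assoc)
  next
    case 3
    show ?thesis
      using mult[OF mult[OF mult[OF simple[OF u] double[OF x]] double[OF y]] simple[OF 3]]
      by (simp add: power3_eq_cube mult.assoc)
  qed
qed

section \<open>Cyclotomic polynomials\<close>

lemma finite_proper_divisors: "finite {d::nat. d dvd n \<and> d < n}"
  by (rule finite_subset[of _ "{..<n}"]) auto

lemma divisors_eq_insert_proper_divisors:
  "0 < n \<Longrightarrow> {d::nat. d dvd n} = insert n {d. d dvd n \<and> d < n}"
  by (auto dest: dvd_imp_le)

lemma prod_divisors_split:
  "0 < (n::nat) \<Longrightarrow> (\<Prod>d | d dvd n. f d) = f n * (\<Prod>d | d dvd n \<and> d < n. f d)"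
  by (simp add: divisors_eq_insert_proper_divisors finite_proper_divisors)

lemma sum_divisors_split:
  "0 < (n::nat) \<Longrightarrow> (\<Sum>d | d dvd n. f d) = f n + (\<Sum>d | d dvd n \<and> d < n. f d)"
  by (simp add: divisors_eq_insert_proper_divisors finite_proper_divisors)

lemma prod_cyclotomic_if_proper_prod_dvd:
  assumes "0 < n"
    and "(\<Prod>d | d dvd n \<and> d < n. cyclotomic d) dvd (monom_minus_one n :: 'a::field_char_0 poly)"
  shows "(\<Prod>d | d dvd n. cyclotomic d) = (monom_minus_one n :: 'a poly)"
proof -
  have "cyclotomic n = monom_minus_one n div (\<Prod>d | d dvd n \<and> d < n. cyclotomic d :: 'a poly)"
    using assms(1) cyclotomic.simps[of n] by (simp add: monom_minus_one_def)
  then have "cyclotomic n * (\<Prod>d | d dvd n \<and> d < n. cyclotomic d) = (monom_minus_one n :: 'a poly)"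
    using assms(2) by simp
  then show ?thesis
    by (simp add: prod_divisors_split[OF assms(1), of cyclotomic])
qed

lemma prime_factor_cyclotomic_not_dvd_proper:
  fixes p :: "'a::field_char_0 poly"
  assumes prod_y: "(\<Prod>d | d dvd y. cyclotomic d) = (monom_minus_one y :: 'a poly)"
    and prod_g: "(\<Prod>d | d dvd g. cyclotomic d) = (monom_minus_one g :: 'a poly)"
    and g: "g dvd y" "g < y"
    and p: "prime_elem p" "p dvd cyclotomic y"
  shows "\<not> p dvd monom_minus_one g"
proof
  assume p_dvd_g: "p dvd monom_minus_one g"
  have "0 < g" "0 < y"
    using g by (auto intro!: Nat.gr0I)
  have "{d. d dvd g} \<subseteq> {d. d dvd y \<and> d < y}"
  proof safe
    fix d
    assume "d dvd g"
    then show "d dvd y"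
      using g(1) by (rule dvd_trans)
    show "d < y"
      using dvd_imp_le[OF \<open>d dvd g\<close> \<open>0 < g\<close>] g(2) by simp
  qed
  then have "(\<Prod>d | d dvd g. cyclotomic d) dvd (\<Prod>d | d dvd y \<and> d < y. cyclotomic d :: 'a poly)"
    by (rule prod_dvd_prod_subset[OF finite_proper_divisors])
  then have "monom_minus_one g dvd (\<Prod>d | d dvd y \<and> d < y. cyclotomic d :: 'a poly)"
    by (simp only: prod_g)
  with p_dvd_g have "p dvd (\<Prod>d | d dvd y \<and> d < y. cyclotomic d)"
    by (rule dvd_trans)
  with p(2) have "p * p dvd cyclotomic y * (\<Prod>d | d dvd y \<and> d < y. cyclotomic d)"
    by (rule mult_dvd_mono)
  then have "p ^ 2 dvd monom_minus_one y"
    using prod_y by (simp add: prod_divisors_split[OF \<open>0 < y\<close>, of cyclotomic] power2_eq_square)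
  with prime_elem_square_not_dvd_monom_minus_one[OF p(1) \<open>0 < y\<close>] show False ..
qed

lemma cyclotomic_dvd_prod_divisors:
  "0 < n \<Longrightarrow> cyclotomic n dvd (\<Prod>d | d dvd n. cyclotomic d :: 'a::field_char_0 poly)"
  by (rule dvd_prodI[OF finite_divisors_nat]) simp_all

lemma cyclotomic_no_common_prime_factor:
  fixes p :: "'a::field_char_0 poly"
  assumes prod: "\<And>e. 0 < e \<Longrightarrow> e dvd x \<or> e dvd y
      \<Longrightarrow> (\<Prod>d | d dvd e. cyclotomic d) = (monom_minus_one e :: 'a poly)"
    and xy: "0 < x" "0 < y" "x \<noteq> y"
    and p: "prime_elem p" "p dvd cyclotomic x"
  shows "\<not> p dvd cyclotomic y"
proof
  assume py: "p dvd cyclotomic y"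
  have "p dvd monom_minus_one x"
    using p(2) cyclotomic_dvd_prod_divisors[OF xy(1)] prod[OF xy(1)] by (auto intro: dvd_trans)
  moreover have "p dvd monom_minus_one y"
    using py cyclotomic_dvd_prod_divisors[OF xy(2)] prod[OF xy(2)] by (auto intro: dvd_trans)
  ultimately have p_dvd_gcd: "p dvd monom_minus_one (gcd x y)"
    by (rule dvd_monom_minus_one_gcd)
  have prod_gcd: "(\<Prod>d | d dvd gcd x y. cyclotomic d) = (monom_minus_one (gcd x y) :: 'a poly)"
    using xy by (intro prod) simp_all
  have "gcd x y \<le> x" "gcd x y \<le> y"
    using xy by simp_all
  then consider "gcd x y < x" | "gcd x y < y"
    using xy(3) by linarith
  then show False
  proof cases
    case 1
    with prime_factor_cyclotomic_not_dvd_proper[OF prod[OF xy(1)] prod_gcd _ _ p] p_dvd_gcd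
    show False
      by simp
  next
    case 2
    with prime_factor_cyclotomic_not_dvd_proper[OF prod[OF xy(2)] prod_gcd _ _ p(1) py] p_dvd_gcd
    show False
      by simp
  qed
qed

lemma prod_cyclotomic:
  "0 < n \<Longrightarrow> (\<Prod>d | d dvd n. cyclotomic d) = (monom_minus_one n :: 'a::field_char_0 poly)"
proof (induction n rule: less_induct)
  case (less n)
  define P where "P = {d. d dvd n \<and> d < n}"
  have pos: "0 < e" if "e \<in> P" for e
    using that less.prems by (auto simp: P_def intro!: Nat.gr0I)
  have IH: "(\<Prod>d | d dvd e. cyclotomic d) = (monom_minus_one e :: 'a poly)"
    if "0 < e" "e dvd x" "x \<in> P" for e x
  proof (rule less.IH[OF _ that(1)])
    show "e < n"
      using dvd_imp_le[OF that(2) pos[OF that(3)]] that(3) by (simp add: P_def)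
  qed
  have "(\<Prod>e\<in>P. cyclotomic e) dvd (monom_minus_one n :: 'a poly)"
  proof (rule prod_dvd_if_pairwise_no_common_prime_factor)
    show "finite P"
      unfolding P_def by (rule finite_proper_divisors)
    show "cyclotomic e dvd (monom_minus_one n :: 'a poly)" if "e \<in> P" for e
    proof -
      have "cyclotomic e dvd (monom_minus_one e :: 'a poly)"
        using cyclotomic_dvd_prod_divisors[OF pos[OF that], where 'a = 'a]
          IH[OF pos[OF that] dvd_refl that] by simp
      also have "monom_minus_one e dvd (monom_minus_one n :: 'a poly)"
        using that by (intro monom_minus_one_dvd) (simp add: P_def)
      finally show ?thesis .
    qed
    show "\<not> p dvd cyclotomic y" if "x \<in> P" "y \<in> P" "x \<noteq> y"
      and "prime_elem p" "p dvd (cyclotomic x :: 'a poly)" for x y p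
      using that by (intro cyclotomic_no_common_prime_factor[OF _ pos pos]) (auto intro: IH)
  qed
  then show ?case
    unfolding P_def by (rule prod_cyclotomic_if_proper_prod_dvd[OF less.prems])
qed

lemma degree_cyclotomic:
  "0 < n \<Longrightarrow> degree (cyclotomic n :: 'a::field_char_0 poly) = totient n"
proof (induction n rule: less_induct)
  case (less n)
  define P where "P = {d. d dvd n \<and> d < n}"
  have prod: "(\<Prod>d | d dvd n. cyclotomic d) = (monom_minus_one n :: 'a poly)"
    by (rule prod_cyclotomic[OF less.prems])
  have nonzero: "\<forall>d\<in>{d. d dvd n}. cyclotomic d \<noteq> (0 :: 'a poly)"
  proof (intro ballI notI)
    fix d
    assume "d \<in> {d. d dvd n}" "cyclotomic d = (0 :: 'a poly)"
    then have "(\<Prod>d | d dvd n. cyclotomic d :: 'a poly) = 0"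
      using finite_divisors_nat[OF less.prems] by (intro prod_zero) auto
    with prod monom_minus_one_nonzero[OF less.prems, where 'a = 'a] show False
      by simp
  qed
  have IH: "degree (cyclotomic d :: 'a poly) = totient d" if "d \<in> P" for d
    using that less.prems by (intro less.IH) (auto simp: P_def intro!: Nat.gr0I)
  have "n = degree (\<Prod>d | d dvd n. cyclotomic d :: 'a poly)"
    unfolding prod by (rule degree_monom_minus_one[OF less.prems, symmetric])
  also have "\<dots> = (\<Sum>d | d dvd n. degree (cyclotomic d :: 'a poly))"
    by (rule degree_prod_eq_sum_degree[OF nonzero])
  also have "\<dots> = degree (cyclotomic n :: 'a poly) + (\<Sum>d\<in>P. totient d)"
    unfolding sum_divisors_split[OF less.prems] P_def[symmetric] using IH by simp
  finally have "n = degree (cyclotomic n :: 'a poly) + (\<Sum>d\<in>P. totient d)" .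
  moreover have "n = totient n + (\<Sum>d\<in>P. totient d)"
    using totient_divisor_sum[of n] unfolding sum_divisors_split[OF less.prems] P_def by simp
  ultimately show ?case
    by linarith
qed

lemma cyclotomic_prime_factor:
  assumes "1 < d"
  obtains p :: "'a::field_char_0 poly"
  where "prime_elem p" "p dvd cyclotomic d" "p dvd monom_minus_one d"
proof -
  have "0 < d"
    using assms by simp
  have "cyclotomic d dvd (\<Prod>e | e dvd d. cyclotomic e :: 'a poly)"
    by (rule cyclotomic_dvd_prod_divisors[OF \<open>0 < d\<close>])
  then have dvd: "cyclotomic d dvd (monom_minus_one d :: 'a poly)"
    by (simp only: prod_cyclotomic[OF \<open>0 < d\<close>])
  then have "cyclotomic d \<noteq> (0 :: 'a poly)"
    using monom_minus_one_nonzero[OF \<open>0 < d\<close>] by auto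
  moreover have "\<not> is_unit (cyclotomic d :: 'a poly)"
    using is_unit_iff_degree[OF \<open>cyclotomic d \<noteq> 0\<close>] degree_cyclotomic[OF \<open>0 < d\<close>, where 'a = 'a]
      \<open>0 < d\<close> by simp
  ultimately obtain p :: "'a poly" where "prime_elem p" "p dvd cyclotomic d"
    by (rule poly_prime_factor_exists)
  moreover from this(2) dvd have "p dvd monom_minus_one d"
    by (rule dvd_trans)
  ultimately show ?thesis
    by (rule that)
qed

section \<open>Laurent polynomials\<close>

lemma mult_cyc_le:
  fixes g :: "'a::field_char_0 poly"
  assumes p: "prime_elem p" "p dvd cyclotomic d"
    and not_dvd: "\<And>s. \<not> p ^ Suc k dvd monom 1 s * g"
  shows "mult_cyc d (i, g) \<le> k"
proof -
  have bounded: "m \<le> k" if "lp_dvd (0, cyclotomic d ^ m) (i, g)" for m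
  proof (rule ccontr)
    assume "\<not> m \<le> k"
    from that obtain c where c: "lp_eq (lp_mult (0, cyclotomic d ^ m) c) (i, g)"
      unfolding lp_dvd_def ..
    obtain s s' h where eq: "monom 1 s' * (cyclotomic d ^ m * h) = monom 1 s * g"
      using c by (cases c) (auto simp: lp_eq_def lp_mult_def)
    have "cyclotomic d ^ m dvd monom 1 s' * (cyclotomic d ^ m * h)"
      by (intro dvd_mult dvd_triv_left)
    then have "cyclotomic d ^ m dvd monom 1 s * g"
      by (simp only: eq)
    moreover have "p ^ Suc k dvd cyclotomic d ^ m"
      using \<open>\<not> m \<le> k\<close>
      by (intro dvd_trans[OF dvd_power_same[OF p(2)] le_imp_power_dvd]) simp
    ultimately show False
      using not_dvd dvd_trans by blast
  qed
  have "lp_dvd (0, cyclotomic d ^ 0) (i, g)"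
    unfolding lp_dvd_def by (rule exI[of _ "(i, g)"]) (simp add: lp_eq_def lp_mult_def)
  then have nonempty: "{m. lp_dvd (0, cyclotomic d ^ m) (i, g)} \<noteq> {}"
    by blast
  have finite: "finite {m. lp_dvd (0, cyclotomic d ^ m) (i, g)}"
    unfolding finite_nat_set_iff_bounded_le using bounded by blast
  show ?thesis
    unfolding mult_cyc_def Max_le_iff[OF finite nonempty] using bounded by blast
qed

lemma snd_lp_mult: "snd (lp_mult a b) = snd a * snd b"
  by (simp add: lp_mult_def split: prod.split)

lemma snd_tpow_minus_one:
  "snd (tpow_minus_one z :: 'a::field lpoly)
     = (if z < 0 then - monom_minus_one (nat \<bar>z\<bar>) else monom_minus_one (nat \<bar>z\<bar>))"
proof -
  have "[:-1:] = (-1 :: 'a poly)"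
    by (rule poly_eqI) (simp add: coeff_pCons split: nat.split)
  then show ?thesis
    by (simp add: tpow_minus_one_def lp_add_def lp_mon_def lp_const_def monom_minus_one_def
        monom_0)
qed

text \<open>For \<open>K \<le> fst a\<close>, the polynomial \<open>t\<^sup>-\<^sup>K a\<close>.\<close>
definition lp_shifted :: "int \<Rightarrow> 'a::field lpoly \<Rightarrow> 'a poly" where
  "lp_shifted K a = monom 1 (nat (fst a - K)) * snd a"

lemma lp_shifted_lp_add:
  assumes "K \<le> fst a" "K \<le> fst b"
  shows "K \<le> fst (lp_add a b) \<and> lp_shifted K (lp_add a b) = lp_shifted K a + lp_shifted K b"
proof -
  obtain k g j h where ab: "a = (k, g)" "b = (j, h)"
    by (cases a, cases b)
  have "nat (min k j - K) + nat (k - min k j) = nat (k - K)"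
    "nat (min k j - K) + nat (j - min k j) = nat (j - K)"
    using assms unfolding ab by auto
  then show ?thesis
    using assms unfolding ab
    by (simp add: lp_add_def lp_shifted_def distrib_left mult.assoc[symmetric] mult_monom)
qed

lemma lp_shifted_lp_sum:
  assumes "K \<le> 0" "\<forall>x\<in>set xs. K \<le> fst x"
  shows "K \<le> fst (lp_sum xs) \<and> lp_shifted K (lp_sum xs) = (\<Sum>x\<leftarrow>xs. lp_shifted K x)"
  using assms(2)
proof (induction xs)
  case Nil
  then show ?case
    using assms(1) by (simp add: lp_sum_def lp_shifted_def)
next
  case (Cons x xs)
  then have IH: "K \<le> fst (lp_sum xs)" "lp_shifted K (lp_sum xs) = (\<Sum>x\<leftarrow>xs. lp_shifted K x)"
    and "K \<le> fst x"
    by simp_all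
  have "lp_sum (x # xs) = lp_add x (lp_sum xs)"
    by (simp add: lp_sum_def)
  then show ?case
    using lp_shifted_lp_add[OF \<open>K \<le> fst x\<close> IH(1)] IH(2) by simp
qed

lemma q_at_eq_geom_poly:
  obtains r where "monom 1 r * snd (q_at n c :: 'a::field lpoly) = geom_poly n (nat \<bar>c\<bar>)"
proof -
  define K where "K = min 0 (int (n - 1) * c)"
  have "K \<le> int i * c" if "i < n" for i
  proof (cases "0 \<le> c")
    case False
    with that have "int (n - 1) * c \<le> int i * c"
      by (intro mult_right_mono_neg) simp_all
    then show ?thesis
      unfolding K_def by linarith
  qed (simp add: K_def)
  then have "K \<le> fst (q_at n c :: 'a lpoly)
      \<and> lp_shifted K (q_at n c :: 'a lpoly) = (\<Sum>i<n. monom 1 (nat (int i * c - K)))"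
    using lp_shifted_lp_sum[of K "map (\<lambda>i. lp_mon (int i * c)) [0..<n]"]
    by (simp add: K_def q_at_def lp_shifted_def lp_mon_def o_def atLeast0LessThan
        flip: sum_set_upt_conv_sum_list_nat)
  moreover have "(\<Sum>i<n. monom 1 (nat (int i * c - K))) = (geom_poly n (nat \<bar>c\<bar>) :: 'a poly)"
  proof (cases "0 \<le> c")
    case True
    then have "K = 0"
      unfolding K_def by simp
    with True show ?thesis
      unfolding geom_poly_def by (simp add: nat_mult_distrib)
  next
    case False
    then have K: "K = int (n - 1) * c"
      unfolding K_def by (simp add: mult_nonneg_nonpos)
    have "(\<Sum>i<n. monom 1 (nat (int i * c - K)))
        = (\<Sum>i<n. monom 1 ((n - Suc i) * nat \<bar>c\<bar>) :: 'a poly)"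
    proof (rule sum.cong[OF refl])
      fix i
      assume "i \<in> {..<n}"
      then have "int i * c - K = int (n - Suc i) * - c"
        by (simp add: K of_nat_diff algebra_simps)
      then have "nat (int i * c - K) = (n - Suc i) * nat (- c)"
        using nat_mult_distrib[of "int (n - Suc i)" "- c"] by simp
      with False show "monom 1 (nat (int i * c - K)) = (monom 1 ((n - Suc i) * nat \<bar>c\<bar>) :: 'a poly)"
        by simp
    qed
    also have "\<dots> = geom_poly n (nat \<bar>c\<bar>)"
      unfolding geom_poly_def by (rule sum.nat_diff_reindex)
    finally show ?thesis .
  qed
  ultimately show ?thesis
    using that[of "nat (fst (q_at n c :: 'a lpoly) - K)"] by (simp add: lp_shifted_def)
qed

lemma prime_elem_cube_not_dvd_edge_poly:
  fixes p :: "'a::field_char_0 poly"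
  assumes p: "prime_elem p" "p dvd monom_minus_one d" "0 < d"
    and "a \<noteq> 0" "b \<noteq> 0" "0 < n"
  shows "\<not> p ^ 3 dvd monom 1 s * monom_minus_one (nat \<bar>a\<bar>) * monom_minus_one (nat \<bar>b\<bar>)
    * geom_poly n (nat \<bar>a + b\<bar>)"
proof (rule prime_elem_cube_not_dvd_mult[OF p(1)])
  show "\<not> p dvd monom 1 s"
    by (rule prime_elem_not_dvd_monom[OF p])
  show "\<not> p ^ 2 dvd monom_minus_one (nat \<bar>a\<bar>)" "\<not> p ^ 2 dvd monom_minus_one (nat \<bar>b\<bar>)"
    using assms by (simp_all add: prime_elem_square_not_dvd_monom_minus_one)
  show "\<not> p ^ 2 dvd geom_poly n (nat \<bar>a + b\<bar>)"
    by (rule prime_elem_square_not_dvd_geom_poly[OF p(1) \<open>0 < n\<close>])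
  show "\<not> p dvd geom_poly n (nat \<bar>a + b\<bar>)"
    if "p dvd monom_minus_one (nat \<bar>a\<bar>)" "p dvd monom_minus_one (nat \<bar>b\<bar>)"
    using prime_elem_not_dvd_geom_poly[OF p(1) dvd_monom_minus_one_add[OF that] \<open>0 < n\<close>] .
qed

lemma prime_elem_cube_not_dvd_edge_lpoly:
  fixes p :: "'a::field_char_0 poly"
  assumes "prime_elem p" "p dvd monom_minus_one d" "0 < d"
    and "a \<noteq> 0" "b \<noteq> 0" "0 < n"
  shows "\<not> p ^ 3 dvd monom 1 s
    * snd (lp_mult (lp_mult (tpow_minus_one a) (tpow_minus_one b)) (q_at n (a + b)))"
proof
  obtain r where r: "monom 1 r * snd (q_at n (a + b) :: 'a lpoly) = geom_poly n (nat \<bar>a + b\<bar>)"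
    by (rule q_at_eq_geom_poly)
  assume "p ^ 3 dvd monom 1 s
    * snd (lp_mult (lp_mult (tpow_minus_one a) (tpow_minus_one b)) (q_at n (a + b)))"
  then have "p ^ 3 dvd monom 1 r * (monom 1 s
    * snd (lp_mult (lp_mult (tpow_minus_one a) (tpow_minus_one b)) (q_at n (a + b))))"
    by (rule dvd_mult)
  also have "\<dots> = monom 1 s * snd (tpow_minus_one a) * snd (tpow_minus_one b)
      * geom_poly n (nat \<bar>a + b\<bar>)"
    unfolding r[symmetric] by (simp add: snd_lp_mult ac_simps)
  finally show False
    using prime_elem_cube_not_dvd_edge_poly[OF assms, of s]
    by (simp add: snd_tpow_minus_one split: if_splits)
qed

theorem lemma5p3:
  fixes V :: "'v set" and E :: "'v set set" and lt :: "'v set \<Rightarrow> nat"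
    and m :: "'v \<Rightarrow> int"
  assumes "simplicial_graph V E"
    and "graph_connected V E"
    and "\<forall>e\<in>E. lt e \<ge> 1"
    and "FC_type V E lt"
    and "chi_surjective V m"
    and "\<forall>v\<in>V. m v \<noteq> 0"
    and "d \<in> T_Gamma V E lt m"
    and "{v, w} \<in> E"
  shows "mult_cyc d
           (lp_mult (lp_mult (tpow_minus_one (m v)) (tpow_minus_one (m w)))
                    (q_at (lt {v, w}) (edge_m m {v, w})) :: 'a::field_char_0 lpoly) \<le> 2"
proof -
  have "{v, w} \<subseteq> V" "card {v, w} = 2"
    using assms(1,8) unfolding simplicial_graph_def by auto
  then have "v \<noteq> w" "m v \<noteq> 0" "m w \<noteq> 0"
    using assms(6) by (auto simp: card_insert_if split: if_splits)
  have "1 < d"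
    using assms(7) unfolding T_Gamma_def by auto
  have "0 < lt {v, w}"
    using assms(3,8) by fastforce
  obtain p :: "'a poly" where p: "prime_elem p" "p dvd cyclotomic d" "p dvd monom_minus_one d"
    using cyclotomic_prime_factor[OF \<open>1 < d\<close>] by blast
  let ?f = "lp_mult (lp_mult (tpow_minus_one (m v)) (tpow_minus_one (m w)))
    (q_at (lt {v, w}) (m v + m w)) :: 'a lpoly"
  have "mult_cyc d (fst ?f, snd ?f) \<le> 2"
  proof (rule mult_cyc_le[OF p(1,2)])
    show "\<not> p ^ Suc 2 dvd monom 1 s * snd ?f" for s
      using prime_elem_cube_not_dvd_edge_lpoly[OF p(1,3) _ \<open>m v \<noteq> 0\<close> \<open>m w \<noteq> 0\<close>
          \<open>0 < lt {v, w}\<close>] \<open>1 < d\<close> by (simp add: numeral_3_eq_3)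
  qed
  moreover have "edge_m m {v, w} = m v + m w"
    using \<open>v \<noteq> w\<close> by (simp add: edge_m_def)
  ultimately show ?thesis
    by simp
qed

end
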